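(* Let $X$ be an uncountable regular open Whyburn space. Then $X$ is $\mathcal{K}$-Lindel\"{o}f if and only if $X$ is a Lusin space.
   Context: A space $X$ is open Whyburn if for every open set $A\subseteq X$ and every point $x\in\overline{A}\setminus A$ there is an open set $B\subseteq A$ with $\overline{B}\setminus A=\{x\}$. $\mathcal{K}$ denotes the collection of all families $\mathcal{U}$ of open subsets of $X$ such that $X=\bigcup\{\overline{U}:U\in\mathcal{U}\}$. $X$ is $\mathcal{K}$-Lindel\"{o}f if every $\mathcal{U}\in\mathcal{K}$ has a countable subfamily belonging to $\mathcal{K}$. A Hausdorff space $X$ is a Lusin space (in the sense of Kunen) if (a) every nowhere dense subset of $X$ is countable, (b) $X$ has at most countably many isolated points, and (c) $X$ is uncountable. *)

theory Defs
  imports "HOL-Analysis.Analysis"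
begin

definition open_Whyburn :: "'a topology \<Rightarrow> bool" where
  "open_Whyburn X \<longleftrightarrow>
     (\<forall>A x. openin X A \<and> x \<in> (X closure_of A) - A \<longrightarrow>
        (\<exists>B. openin X B \<and> B \<subseteq> A \<and> (X closure_of B) - A = {x}))"

definition K_family :: "'a topology \<Rightarrow> 'a set set \<Rightarrow> bool" where
  "K_family X \<U> \<longleftrightarrow> (\<forall>U\<in>\<U>. openin X U) \<and> topspace X = \<Union>{X closure_of U | U. U \<in> \<U>}"

definition K_Lindelof :: "'a topology \<Rightarrow> bool" where
  "K_Lindelof X \<longleftrightarrow>
     (\<forall>\<U>. K_family X \<U> \<longrightarrow> (\<exists>\<V>. \<V> \<subseteq> \<U> \<and> countable \<V> \<and> K_family X \<V>))"

definition nowhere_dense_in :: "'a topology \<Rightarrow> 'a set \<Rightarrow> bool" where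
  "nowhere_dense_in X A \<longleftrightarrow> A \<subseteq> topspace X \<and> X interior_of (X closure_of A) = {}"

definition isolated_points :: "'a topology \<Rightarrow> 'a set" where
  "isolated_points X = {x \<in> topspace X. openin X {x}}"

definition Lusin_space :: "'a topology \<Rightarrow> bool" where
  "Lusin_space X \<longleftrightarrow> Hausdorff_space X
     \<and> (\<forall>A. nowhere_dense_in X A \<longrightarrow> countable A)
     \<and> countable (isolated_points X)
     \<and> uncountable (topspace X)"

end

theory Submission imports Defs begin

text \<open>
  If \<open>X\<close> is \<open>\<K>\<close>-Lindelof, a closed nowhere dense set \<open>F\<close> is countable: the open sets whose
  closures meet \<open>F\<close> in at most one point form a \<open>\<K>\<close>-family, by open Whyburn at the points of
  \<open>F\<close> and by regularity elsewhere. If the set \<open>I\<close> of isolated points were uncountable, there is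
  an uncountable \<open>K \<subseteq> I\<close> whose removal keeps the countable set \<open>cl I - I\<close> inside \<open>cl (I - K)\<close>;
  then the singletons of \<open>K\<close> together with \<open>X - cl K\<close> form a \<open>\<K>\<close>-family none of whose
  singletons can be dropped.

  Conversely, in a Lusin space points chosen from pairwise disjoint nonempty open sets form a
  discrete set, nowhere dense apart from its isolated points, so such families are countable.
  A maximal disjoint family of nonempty open sets, each inside a member of a \<open>\<K>\<close>-family
  \<open>\<U>\<close>, thus yields countably many members of \<open>\<U>\<close> with dense open union \<open>G\<close>; their closures
  cover all of \<open>X\<close> but the countable nowhere dense set \<open>X - G\<close>.
\<close>

lemma K_familyI:
  assumes "\<And>U. U \<in> \<U> \<Longrightarrow> openin X U"
    and "\<And>x. x \<in> topspace X \<Longrightarrow> \<exists>U\<in>\<U>. x \<in> X closure_of U"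
  shows "K_family X \<U>"
  using assms closure_of_subset_topspace unfolding K_family_def by fast

lemma K_LindelofD:
  "K_Lindelof X \<Longrightarrow> K_family X \<U> \<Longrightarrow> \<exists>\<V>\<subseteq>\<U>. countable \<V> \<and> K_family X \<V>"
  unfolding K_Lindelof_def by blast

lemma K_family_openin: "K_family X \<U> \<Longrightarrow> U \<in> \<U> \<Longrightarrow> openin X U"
  unfolding K_family_def by blast

lemma K_family_cover:
  "K_family X \<U> \<Longrightarrow> x \<in> topspace X \<Longrightarrow> \<exists>U\<in>\<U>. x \<in> X closure_of U"
  unfolding K_family_def by blast

lemma isolated_point_in_closure_of:
  "y \<in> isolated_points X \<Longrightarrow> y \<in> X closure_of S \<Longrightarrow> y \<in> S"
  by (auto simp: isolated_points_def in_closure_of)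

lemma isolated_points_subset_topspace: "isolated_points X \<subseteq> topspace X"
  by (auto simp: isolated_points_def)

lemma openin_isolated_points: "openin X (isolated_points X)"
proof -
  have "isolated_points X = (\<Union>y\<in>isolated_points X. {y})" by blast
  also have "openin X \<dots>" unfolding isolated_points_def by (intro openin_Union) auto
  finally show ?thesis .
qed

lemma nowhere_dense_closure_of_diff_openin:
  assumes "openin X U"
  shows "nowhere_dense_in X (X closure_of U - U)"
proof -
  have closed: "closedin X (X closure_of U - U)"
    using assms by (intro closedin_diff) auto
  have "T = {}" if "openin X T" "T \<subseteq> X closure_of U - U" for T
  proof -
    have "T \<inter> X closure_of U = T" using that(2) by blast
    moreover have "T \<inter> U = {}" using that(2) by blast
    ultimately show ?thesis using openin_Int_closure_of_eq_empty[OF that(1)] by blast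
  qed
  then show ?thesis
    using closed closedin_subset closure_of_closedin interior_of_eq_empty
    unfolding nowhere_dense_in_def by metis
qed

lemma K_Lindelof_countable_subset:
  assumes KL: "K_Lindelof X" and F: "F \<subseteq> topspace X"
    and sep: "\<And>z. z \<in> topspace X \<Longrightarrow>
                \<exists>B. openin X B \<and> z \<in> X closure_of B \<and> X closure_of B \<inter> F \<subseteq> {z}"
  shows "countable F"
proof -
  define \<U> where "\<U> = {B. openin X B \<and> (\<exists>z. X closure_of B \<inter> F \<subseteq> {z})}"
  have "K_family X \<U>"
  proof (rule K_familyI)
    show "openin X B" if "B \<in> \<U>" for B using that unfolding \<U>_def by blast
  next
    fix z assume "z \<in> topspace X"
    then obtain B where "openin X B" "z \<in> X closure_of B" "X closure_of B \<inter> F \<subseteq> {z}"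
      using sep by blast
    then show "\<exists>B\<in>\<U>. z \<in> X closure_of B" unfolding \<U>_def by blast
  qed
  then obtain \<V> where \<V>: "\<V> \<subseteq> \<U>" "countable \<V>" "K_family X \<V>"
    using K_LindelofD[OF KL] by blast
  have "F \<subseteq> (\<Union>B\<in>\<V>. X closure_of B \<inter> F)"
    using F K_family_cover[OF \<V>(3)] by blast
  moreover have "countable (X closure_of B \<inter> F)" if B: "B \<in> \<V>" for B
  proof -
    obtain z where "X closure_of B \<inter> F \<subseteq> {z}" using B \<V>(1) unfolding \<U>_def by blast
    then show ?thesis by (rule countable_subset) simp
  qed
  then have "countable (\<Union>B\<in>\<V>. X closure_of B \<inter> F)" using \<V>(2) by blast
  ultimately show ?thesis by (rule countable_subset)
qed

lemma open_Whyburn_closure_of_Int_eq_singleton: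
  assumes W: "open_Whyburn X" and F: "closedin X F" "X interior_of F = {}" and z: "z \<in> F"
  obtains B where "openin X B" "X closure_of B \<inter> F = {z}"
proof -
  let ?G = "topspace X - F"
  have "X closure_of ?G = topspace X"
    using F(2) by (simp add: closure_of_complement)
  then have "z \<in> X closure_of ?G - ?G"
    using F(1) z closedin_subset by blast
  then obtain B where "openin X B" "B \<subseteq> ?G" "X closure_of B - ?G = {z}"
    using W F(1) unfolding open_Whyburn_def by blast
  then show ?thesis
    using that closure_of_subset_topspace[of X B] by blast
qed

lemma K_Lindelof_countable_nowhere_dense:
  assumes KL: "K_Lindelof X" and reg: "regular_space X" and W: "open_Whyburn X"
    and A: "nowhere_dense_in X A"
  shows "countable A"
proof -
  let ?F = "X closure_of A"
  have "countable ?F"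
  proof (rule K_Lindelof_countable_subset[OF KL])
    fix z assume z: "z \<in> topspace X"
    show "\<exists>B. openin X B \<and> z \<in> X closure_of B \<and> X closure_of B \<inter> ?F \<subseteq> {z}"
    proof (cases "z \<in> ?F")
      case True
      have "X interior_of ?F = {}" using A unfolding nowhere_dense_in_def by blast
      then obtain B where "openin X B" "X closure_of B \<inter> ?F = {z}"
        using open_Whyburn_closure_of_Int_eq_singleton[OF W closedin_closure_of _ True] by blast
      then show ?thesis by blast
    next
      case False
      then obtain U where "openin X U" "z \<in> U" "disjnt ?F (X closure_of U)"
        using reg z closedin_closure_of unfolding regular_space by blast
      moreover have "U \<subseteq> X closure_of U"
        using \<open>openin X U\<close> by (simp add: closure_of_subset openin_subset)
      ultimately show ?thesis unfolding disjnt_def by blast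
    qed
  qed (rule closure_of_subset_topspace)
  moreover have "A \<subseteq> ?F" using A unfolding nowhere_dense_in_def by (simp add: closure_of_subset)
  ultimately show ?thesis by (simp add: countable_subset)
qed

lemma uncountable_disjoint_family_of_uncountable_subsets:
  assumes "uncountable I"
  obtains J where "\<And>i. i \<in> I \<Longrightarrow> J i \<subseteq> I \<and> uncountable (J i)" "disjoint_family_on J I"
proof -
  have "infinite I" using assms countable_finite by blast
  then obtain g where g: "bij_betw g (I \<times> I) I"
    using card_of_ordIso card_of_Times_same_infinite by blast
  define J where "J i = g ` ({i} \<times> I)" for i
  have "J i \<subseteq> I \<and> uncountable (J i)" if "i \<in> I" for i
  proof
    show "J i \<subseteq> I" using g that unfolding J_def bij_betw_def by auto
    have "inj_on (\<lambda>y. g (i, y)) I" "(\<lambda>y. g (i, y)) ` I = J i"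
      using g that unfolding J_def bij_betw_def inj_on_def by auto
    then show "uncountable (J i)" using assms countable_image_inj_on by metis
  qed
  moreover have "disjoint_family_on J I"
    using g unfolding J_def disjoint_family_on_def bij_betw_def inj_on_def by blast
  ultimately show ?thesis using that by blast
qed

text \<open>Cutting \<open>I\<close> into uncountably many uncountable pieces, a point of the closure of \<open>I\<close>
  can fail to be in the closure of the complement of at most one piece.\<close>

lemma uncountable_subset_closure_of_complement:
  assumes I: "uncountable I" and F: "countable F" "F \<subseteq> X closure_of I"
  obtains K where "K \<subseteq> I" "uncountable K" "F \<subseteq> X closure_of (I - K)"
proof -
  obtain J where J: "\<And>i. i \<in> I \<Longrightarrow> J i \<subseteq> I \<and> uncountable (J i)" "disjoint_family_on J I"
    using uncountable_disjoint_family_of_uncountable_subsets[OF I] by blast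
  define bad where "bad x = {i \<in> I. x \<notin> X closure_of (I - J i)}" for x
  have bad_unique: "i = k" if "x \<in> F" "i \<in> bad x" "k \<in> bad x" for x i k
  proof (rule ccontr)
    assume "i \<noteq> k"
    then have "I = (I - J i) \<union> (I - J k)"
      using J(2) that(2,3) unfolding bad_def disjoint_family_on_def by blast
    then have "X closure_of I = X closure_of (I - J i) \<union> X closure_of (I - J k)"
      by (metis closure_of_Un)
    then show False using F(2) that unfolding bad_def by blast
  qed
  have "countable (bad x)" if "x \<in> F" for x
  proof (cases "bad x = {}")
    case False
    then obtain i where "i \<in> bad x" by blast
    then have "bad x \<subseteq> {i}" using that bad_unique by blast
    then show ?thesis by (rule countable_subset) simp
  qed simp
  then have "countable (\<Union>x\<in>F. bad x)" using F(1) by blast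
  then obtain i where i: "i \<in> I" "i \<notin> (\<Union>x\<in>F. bad x)"
    using I by (metis countable_subset subsetI)
  show ?thesis
  proof (rule that)
    show "J i \<subseteq> I" "uncountable (J i)" using J(1)[OF i(1)] by auto
    show "F \<subseteq> X closure_of (I - J i)" using i unfolding bad_def by blast
  qed
qed

lemma K_family_isolated_singletons:
  assumes K: "K \<subseteq> isolated_points X"
    and K_bdry: "X closure_of isolated_points X - isolated_points X
                   \<subseteq> X closure_of (isolated_points X - K)"
  shows "K_family X (insert (topspace X - X closure_of K) ((\<lambda>y. {y}) ` K))"
proof (rule K_familyI)
  let ?I = "isolated_points X"
  let ?E = "topspace X - X closure_of K"
  have E: "openin X ?E" by (simp add: openin_diff)
  show "openin X U" if "U \<in> insert ?E ((\<lambda>y. {y}) ` K)" for U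
    using that E K unfolding isolated_points_def by auto
  fix z assume z: "z \<in> topspace X"
  consider "z \<in> K" | "z \<in> X closure_of K - K" | "z \<in> ?E"
    using z by blast
  then show "\<exists>U\<in>insert ?E ((\<lambda>y. {y}) ` K). z \<in> X closure_of U"
  proof cases
    case 1
    then have "z \<in> X closure_of {z}" using z by (auto simp: in_closure_of)
    then show ?thesis using 1 by blast
  next
    case 2
    have "?I - K \<subseteq> ?E"
      using isolated_point_in_closure_of[of _ X K] isolated_points_subset_topspace[of X] by blast
    then have "X closure_of (?I - K) \<subseteq> X closure_of ?E" by (rule closure_of_mono)
    moreover have "z \<in> X closure_of ?I - ?I"
      using 2 closure_of_mono[OF K] isolated_point_in_closure_of[of z X K] by blast
    ultimately show ?thesis using K_bdry by blast
  next
    case 3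
    then have "z \<in> X closure_of ?E" using closure_of_subset[OF openin_subset[OF E]] by blast
    then show ?thesis by blast
  qed
qed

lemma K_Lindelof_countable_isolated_points:
  assumes KL: "K_Lindelof X"
    and F: "countable (X closure_of isolated_points X - isolated_points X)"
  shows "countable (isolated_points X)"
proof (rule ccontr)
  let ?I = "isolated_points X"
  assume "uncountable ?I"
  moreover have "X closure_of ?I - ?I \<subseteq> X closure_of ?I" by blast
  ultimately obtain K where K: "K \<subseteq> ?I" "uncountable K" and
    K_bdry: "X closure_of ?I - ?I \<subseteq> X closure_of (?I - K)"
    using F by (metis uncountable_subset_closure_of_complement)
  let ?E = "topspace X - X closure_of K"
  define \<U> where "\<U> = insert ?E ((\<lambda>y. {y}) ` K)"
  have "K_family X \<U>"
    unfolding \<U>_def using K_family_isolated_singletons[OF K(1) K_bdry] .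
  then obtain \<V> where \<V>: "\<V> \<subseteq> \<U>" "countable \<V>" "K_family X \<V>"
    using K_LindelofD[OF KL] by blast
  have "{y} \<in> \<V>" if y: "y \<in> K" for y
  proof -
    have y_iso: "y \<in> ?I" using y K(1) by blast
    then have "y \<in> topspace X" using isolated_points_subset_topspace[of X] by blast
    then obtain B where B: "B \<in> \<V>" "y \<in> X closure_of B"
      using K_family_cover[OF \<V>(3)] by blast
    have "y \<in> B" using isolated_point_in_closure_of[OF y_iso B(2)] .
    moreover have "y \<in> X closure_of K"
      using y K(1) isolated_points_subset_topspace[of X] closure_of_subset[of K X] by blast
    ultimately have "B \<noteq> ?E" by blast
    then obtain y' where "B = {y'}" using B(1) \<V>(1) unfolding \<U>_def by blast
    then show ?thesis using \<open>y \<in> B\<close> B(1) by blast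
  qed
  then have "(\<lambda>y. {y}) ` K \<subseteq> \<V>" by blast
  then have "countable ((\<lambda>y. {y}) ` K)" using \<V>(2) by (rule countable_subset)
  then have "countable K" by (rule countable_image_inj_on) simp
  then show False using K(2) by blast
qed

lemma t1_space_discrete_nowhere_dense:
  assumes t1: "t1_space X" and S: "S \<subseteq> topspace X"
    and discrete: "\<And>s. s \<in> S \<Longrightarrow> \<exists>D. openin X D \<and> S \<inter> D = {s}"
    and no_iso: "S \<inter> isolated_points X = {}"
  shows "nowhere_dense_in X S"
proof -
  let ?W = "X interior_of (X closure_of S)"
  have "?W = {}"
  proof (rule ccontr)
    assume "?W \<noteq> {}"
    moreover have "?W \<inter> X closure_of S = ?W" using interior_of_subset[of X "X closure_of S"] by blast
    ultimately obtain s where s: "s \<in> S" "s \<in> ?W"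
      using openin_Int_closure_of_eq_empty[OF openin_interior_of, of X "X closure_of S" S] by blast
    obtain D where D: "openin X D" "S \<inter> D = {s}" using discrete[OF s(1)] by blast
    let ?T = "?W \<inter> D - {s}"
    have "closedin X {s}" using t1 S s(1) by (auto simp: t1_space_closedin_singleton)
    then have "openin X ?T" using D(1) by (intro openin_diff openin_Int) auto
    moreover have "?T \<inter> S = {}" using D(2) by blast
    ultimately have "?T \<inter> X closure_of S = {}" by (simp add: openin_Int_closure_of_eq_empty)
    moreover have "?T \<subseteq> X closure_of S" using interior_of_subset[of X "X closure_of S"] by blast
    ultimately have "?W \<inter> D = {s}" using s D(2) by blast
    moreover have "openin X (?W \<inter> D)" using D(1) by (simp add: openin_Int)
    ultimately have "openin X {s}" by simp
    then show False using no_iso s(1) S unfolding isolated_points_def by blast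
  qed
  then show ?thesis using S unfolding nowhere_dense_in_def by blast
qed

lemma Lusin_space_countable_discrete:
  assumes L: "Lusin_space X" and S: "S \<subseteq> topspace X"
    and discrete: "\<And>s. s \<in> S \<Longrightarrow> \<exists>D. openin X D \<and> S \<inter> D = {s}"
  shows "countable S"
proof -
  let ?S' = "S - isolated_points X"
  have "nowhere_dense_in X ?S'"
  proof (rule t1_space_discrete_nowhere_dense)
    show "t1_space X" using L Hausdorff_imp_t1_space unfolding Lusin_space_def by blast
    show "\<exists>D. openin X D \<and> ?S' \<inter> D = {s}" if "s \<in> ?S'" for s
      using that discrete[of s] by blast
  qed (use S in auto)
  then have "countable ?S'" using L unfolding Lusin_space_def by blast
  moreover have "countable (isolated_points X)" using L unfolding Lusin_space_def by blast
  ultimately have "countable (?S' \<union> isolated_points X)" by (rule countable_Un)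
  moreover have "S \<subseteq> ?S' \<union> isolated_points X" by blast
  ultimately show ?thesis by (simp add: countable_subset)
qed

lemma Lusin_space_countable_disjoint_openin:
  assumes L: "Lusin_space X" and disj: "pairwise disjnt \<D>"
    and op: "\<And>D. D \<in> \<D> \<Longrightarrow> openin X D" and ne: "{} \<notin> \<D>"
  shows "countable \<D>"
proof -
  define c where "c D = (SOME x. x \<in> D)" for D :: "'a set"
  have c: "c D \<in> D" if "D \<in> \<D>" for D
    using that ne unfolding c_def by (metis some_in_eq)
  have same: "D = D'" if "D \<in> \<D>" "D' \<in> \<D>" "x \<in> D" "x \<in> D'" for D D' x
    using disj that unfolding pairwise_def disjnt_def by blast
  have "c ` \<D> \<inter> D = {c D}" if "D \<in> \<D>" for D
    using that c same by blast
  then have "countable (c ` \<D>)"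
    using c op openin_subset by (intro Lusin_space_countable_discrete[OF L]) blast+
  moreover have "inj_on c \<D>" using c same by (metis inj_onI)
  ultimately show ?thesis by (rule countable_image_inj_on)
qed

lemma maximal_pairwise_disjnt_subset:
  obtains \<M> where "\<M> \<subseteq> \<Q>" "pairwise disjnt \<M>"
    "\<And>W. W \<in> \<Q> \<Longrightarrow> W \<noteq> {} \<Longrightarrow> \<exists>D\<in>\<M>. \<not> disjnt W D"
proof -
  define P where "P = {\<M>. \<M> \<subseteq> \<Q> \<and> pairwise disjnt \<M>}"
  have "\<Union>C \<in> P" if C: "C \<in> chains P" for C
  proof -
    have "\<Union>C \<subseteq> \<Q>" using C unfolding chains_def P_def by blast
    moreover have "pairwise disjnt (\<Union>C)"
      using C unfolding chains_def P_def by (intro pairwise_chain_Union) auto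
    ultimately show ?thesis unfolding P_def by blast
  qed
  then obtain \<M> where \<M>: "\<M> \<in> P" and max: "\<And>\<N>. \<N> \<in> P \<Longrightarrow> \<M> \<subseteq> \<N> \<Longrightarrow> \<N> = \<M>"
    using Zorn_Lemma[of P] by blast
  have "\<exists>D\<in>\<M>. \<not> disjnt W D" if W: "W \<in> \<Q>" "W \<noteq> {}" for W
  proof (rule ccontr)
    assume "\<not> (\<exists>D\<in>\<M>. \<not> disjnt W D)"
    then have "insert W \<M> \<in> P"
      using \<M> W(1) unfolding P_def by (auto simp: pairwise_insert disjnt_sym)
    then have "W \<in> \<M>" using max by blast
    then show False using \<open>\<not> (\<exists>D\<in>\<M>. \<not> disjnt W D)\<close> W(2) by (auto simp: disjnt_def)
  qed
  then show ?thesis using that \<M> unfolding P_def by blast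
qed

lemma Lusin_space_countable_K_subfamily_of_dense:
  assumes L: "Lusin_space X" and \<U>: "K_family X \<U>"
    and \<V>\<^sub>0: "\<V>\<^sub>0 \<subseteq> \<U>" "countable \<V>\<^sub>0" "X closure_of \<Union>\<V>\<^sub>0 = topspace X"
  shows "\<exists>\<V>. \<V> \<subseteq> \<U> \<and> countable \<V> \<and> K_family X \<V>"
proof -
  note op = K_family_openin[OF \<U>]
  let ?G = "\<Union>\<V>\<^sub>0"
  have "openin X ?G" using \<V>\<^sub>0(1) op by (intro openin_Union) blast
  then have "nowhere_dense_in X (topspace X - ?G)"
    using nowhere_dense_closure_of_diff_openin[of X ?G] \<V>\<^sub>0(3) by simp
  then have "countable (topspace X - ?G)" using L unfolding Lusin_space_def by blast
  have "\<forall>x\<in>topspace X - ?G. \<exists>U. U \<in> \<U> \<and> x \<in> X closure_of U"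
    using K_family_cover[OF \<U>] by blast
  then obtain w where w: "\<forall>x\<in>topspace X - ?G. w x \<in> \<U> \<and> x \<in> X closure_of (w x)"
    by (rule bchoice[THEN exE])
  define \<V> where "\<V> = \<V>\<^sub>0 \<union> w ` (topspace X - ?G)"
  have "\<V> \<subseteq> \<U>" unfolding \<V>_def using \<V>\<^sub>0(1) w by blast
  moreover have "countable \<V>"
    unfolding \<V>_def using \<V>\<^sub>0(2) \<open>countable (topspace X - ?G)\<close> by blast
  moreover have "K_family X \<V>"
  proof (rule K_familyI)
    show "openin X U" if "U \<in> \<V>" for U using that \<open>\<V> \<subseteq> \<U>\<close> op by blast
  next
    fix x assume x: "x \<in> topspace X"
    show "\<exists>U\<in>\<V>. x \<in> X closure_of U"
    proof (cases "x \<in> ?G")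
      case True
      then obtain U where U: "U \<in> \<V>\<^sub>0" "x \<in> U" by blast
      then have "openin X U" using op \<V>\<^sub>0(1) by blast
      then have "x \<in> X closure_of U" using U(2) closure_of_subset[OF openin_subset] by blast
      then show ?thesis using U(1) unfolding \<V>_def by blast
    next
      case False
      then show ?thesis using x w unfolding \<V>_def by blast
    qed
  qed
  ultimately show ?thesis by blast
qed

lemma Lusin_space_imp_K_Lindelof:
  assumes L: "Lusin_space X"
  shows "K_Lindelof X"
  unfolding K_Lindelof_def
proof (intro allI impI)
  fix \<U> assume \<U>: "K_family X \<U>"
  note op = K_family_openin[OF \<U>]
  define \<Q> where "\<Q> = {V. openin X V \<and> V \<noteq> {} \<and> (\<exists>U\<in>\<U>. V \<subseteq> U)}"
  obtain \<M> where \<M>: "\<M> \<subseteq> \<Q>" and disj: "pairwise disjnt \<M>"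
    and max: "\<And>W. W \<in> \<Q> \<Longrightarrow> W \<noteq> {} \<Longrightarrow> \<exists>D\<in>\<M>. \<not> disjnt W D"
    using maximal_pairwise_disjnt_subset[of \<Q>] by blast
  have "countable \<M>"
    using \<M> unfolding \<Q>_def by (intro Lusin_space_countable_disjoint_openin[OF L disj]) auto
  have "\<forall>D\<in>\<M>. \<exists>U. U \<in> \<U> \<and> D \<subseteq> U" using \<M> unfolding \<Q>_def by blast
  then obtain u where u: "\<forall>D\<in>\<M>. u D \<in> \<U> \<and> D \<subseteq> u D" by (rule bchoice[THEN exE])
  let ?G = "\<Union>(u ` \<M>)"
  have "T = {}" if T: "openin X T" "T \<subseteq> topspace X - ?G" for T
  proof (rule ccontr)
    assume "T \<noteq> {}"
    then obtain z where z: "z \<in> T" by blast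
    then obtain U where U: "U \<in> \<U>" "z \<in> X closure_of U"
      using K_family_cover[OF \<U>] T openin_subset[of X T] by blast
    then have "T \<inter> U \<noteq> {}"
      using z openin_Int_closure_of_eq_empty[OF T(1), of U] by blast
    moreover have "openin X (T \<inter> U)" using T(1) op[OF U(1)] by blast
    ultimately obtain D where "D \<in> \<M>" "\<not> disjnt (T \<inter> U) D"
      using max[of "T \<inter> U"] U(1) unfolding \<Q>_def by blast
    moreover have "D \<subseteq> ?G" using u \<open>D \<in> \<M>\<close> by blast
    ultimately show False using T(2) unfolding disjnt_def by blast
  qed
  then have "X closure_of ?G = topspace X"
    unfolding closure_of_eq_topspace interior_of_eq_empty by blast
  moreover have "u ` \<M> \<subseteq> \<U>" using u by blast
  moreover have "countable (u ` \<M>)" using \<open>countable \<M>\<close> by blast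
  ultimately show "\<exists>\<V>. \<V> \<subseteq> \<U> \<and> countable \<V> \<and> K_family X \<V>"
    by (intro Lusin_space_countable_K_subfamily_of_dense[OF L \<U>])
qed

theorem corollary3p3:
  fixes X :: "'a topology"
  assumes "uncountable (topspace X)"
    and "regular_space X" and "Hausdorff_space X"
    and "open_Whyburn X"
  shows "K_Lindelof X \<longleftrightarrow> Lusin_space X"
proof
  assume KL: "K_Lindelof X"
  have nowhere_dense: "countable A" if "nowhere_dense_in X A" for A
    using K_Lindelof_countable_nowhere_dense[OF KL assms(2,4) that] .
  have "countable (isolated_points X)"
    using K_Lindelof_countable_isolated_points[OF KL] nowhere_dense
      nowhere_dense_closure_of_diff_openin[OF openin_isolated_points] by blast
  then show "Lusin_space X"
    unfolding Lusin_space_def using assms(1,3) nowhere_dense by blast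
next
  assume "Lusin_space X"
  then show "K_Lindelof X" by (rule Lusin_space_imp_K_Lindelof)
qed

end
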